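(* The tensor $\mu^{(1)}:=\alpha_p\big\langle\{G(\nabla\chi^{(2)}+I\otimes\chi^{(1)})\overline{\phi^0}\}-\{G\chi^{(2)}\otimes\overline{\nabla\phi^0}\}\big\rangle$ vanishes: $\mu^{(1)}=0$. Also $\langle\rho\chi^{(1)}\overline{\phi^0}\rangle=0$ and $\langle\rho\chi^{(2)}\overline{\phi^0}\rangle=0$.
   Context: Let $d\ge1$; $G,\rho:\mathbb{R}^d\to\mathbb{R}$ smooth, $\mathbb{Z}^d$-periodic, bounded below by a positive constant. $W_I=[-1/2,1/2]^d$. Bloch eigenproblem: for each $k\in\mathbb{R}^d$, $-(\nabla+ik)\cdot[G(\nabla+ik)\phi]=\omega^2\rho\phi$ on $\mathbb{Z}^d$-periodic $\phi$ has eigenvalues $0\le\omega_0^2(k)\le\omega_1^2(k)\le\cdots$ with $\mathbb{Z}^d$-periodic eigenfunctions $\phi_m(k;\cdot)$, orthonormal w.r.t. $\int_{W_I}\rho\phi_m\overline{\phi_n}=\delta_{mn}$. A fixed index $p\ge0$ is such that $\omega_p^2(0)$ is simple; write $\phi^0=\phi_p(0;\cdot)$, $\hat\omega_0^2=\omega_p^2(0)$, $\langle g\rangle=\int_{W_I}g$. Tensor conventions: $\otimes$ concatenates indices; $I$ is the Kronecker delta; $(\nabla T)_{a i_1\dots i_n}=\partial_aT_{i_1\dots i_n}$; for an order-$(n+1)$ tensor $A$, $A:\overline{\nabla\phi}=\sum_aA_{a i_1\dots i_n}\overline{\partial_a\phi}$; $\{\tau\}$ is the average over all permutations of the indices; $\{\tau\}'_{j_1\dots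 j_n}=\frac{1}{(n-1)!}\sum\tau_{j_1l_2\dots l_n}$ over permutations $(l_2,\dots,l_n)$ of $(j_2,\dots,j_n)$. Cell functions: $\alpha_p=\langle\phi^0\overline{\phi^0}\rangle^{-1}$, $\rho^{(0)}=\alpha_p\langle\rho\phi^0\overline{\phi^0}\rangle$. $\chi^{(1)}\in(H^1_{\rm per}(W_I))^d$ is the unique solution with $\int\rho\chi^{(1)}\overline{\phi^0}=0$ of: for all periodic $\phi\in H^1_{\rm per}$, $\int G(\nabla\chi^{(1)}+I\phi^0):\overline{\nabla\phi}-\int G\nabla\phi^0\overline\phi=\hat\omega_0^2\int\rho\chi^{(1)}\overline\phi$. $\mu^{(0)}=\alpha_p\langle\{G(\nabla\chi^{(1)}+I\phi^0)\overline{\phi^0}\}-\{G\chi^{(1)}\otimes\overline{\nabla\phi^0}\}\rangle$. $\chi^{(2)}\in(H^1_{\rm per}(W_I))^{d\times d}$ is the unique solution with $\int\rho\chi^{(2)}\overline{\phi^0}=0$ of: for all $\phi\in H^1_{\rm per}$, $\int G(\nabla\chi^{(2)}+\{I\otimes\chi^{(1)}\}'):\overline{\nabla\phi}-\int G(\{\nabla\chi^{(1)}\}+I\phi^0)\overline\phi+\int\frac{\rho}{\rho^{(0)}}\mu^{(0)}\phi^0\overline\phi=\hat\omega_0^2\int\rho\chi^{(2)}\overline\phi$. *)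

theory Defs
  imports "HOL-Analysis.Analysis"
begin

text \<open>Points of R^d are vectors of type real^'d, with 'd a finite index type (d = CARD('d) >= 1).\<close>

definition pd :: "'d::finite \<Rightarrow> (real^'d \<Rightarrow> 'b::real_normed_vector) \<Rightarrow> real^'d \<Rightarrow> 'b" where
  "pd a f x = vector_derivative (\<lambda>t. f (x + t *\<^sub>R axis a 1)) (at 0)"

primrec iter_pd :: "'d::finite list \<Rightarrow> (real^'d \<Rightarrow> 'b::real_normed_vector) \<Rightarrow> real^'d \<Rightarrow> 'b" where
  "iter_pd [] f = f"
| "iter_pd (a # as) f = pd a (iter_pd as f)"

definition smooth_fun :: "(real^'d::finite \<Rightarrow> 'b::real_normed_vector) \<Rightarrow> bool" where
  "smooth_fun f \<longleftrightarrow>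
     (\<forall>as. continuous_on UNIV (iter_pd as f) \<and>
       (\<forall>a x. ((\<lambda>t. iter_pd as f (x + t *\<^sub>R axis a 1)) has_vector_derivative
                 iter_pd (a # as) f x) (at 0)))"

definition zd_periodic :: "(real^'d::finite \<Rightarrow> 'b) \<Rightarrow> bool" where
  "zd_periodic f \<longleftrightarrow> (\<forall>x v. (\<forall>i. v $ i \<in> \<int>) \<longrightarrow> f (x + v) = f x)"

definition WI :: "(real^'d::finite) set" where
  "WI = cbox (\<chi> i. - (1/2)) (\<chi> i. 1/2)"

definition cavg :: "(real^'d::finite \<Rightarrow> complex) \<Rightarrow> complex" where
  "cavg f = integral WI f"

definition kd :: "'d \<Rightarrow> 'd \<Rightarrow> complex" where
  "kd a b = (if a = b then 1 else 0)"

definition sym2 :: "('d \<Rightarrow> 'd \<Rightarrow> complex) \<Rightarrow> 'd \<Rightarrow> 'd \<Rightarrow> complex" where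
  "sym2 T i j = (T i j + T j i) / 2"

definition sym3 :: "('d \<Rightarrow> 'd \<Rightarrow> 'd \<Rightarrow> complex) \<Rightarrow> 'd \<Rightarrow> 'd \<Rightarrow> 'd \<Rightarrow> complex" where
  "sym3 T i j k = (T i j k + T i k j + T j i k + T j k i + T k i j + T k j i) / 6"

definition alpha_p :: "(real^'d::finite \<Rightarrow> complex) \<Rightarrow> complex" where
  "alpha_p \<phi>0 = inverse (cavg (\<lambda>x. \<phi>0 x * cnj (\<phi>0 x)))"

definition rho0 :: "(real^'d::finite \<Rightarrow> real) \<Rightarrow> (real^'d \<Rightarrow> complex) \<Rightarrow> complex" where
  "rho0 \<rho> \<phi>0 = alpha_p \<phi>0 * cavg (\<lambda>x. complex_of_real (\<rho> x) * \<phi>0 x * cnj (\<phi>0 x))"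

definition mu0 :: "(real^'d::finite \<Rightarrow> real) \<Rightarrow> (real^'d \<Rightarrow> complex) \<Rightarrow> ('d \<Rightarrow> real^'d \<Rightarrow> complex)
                    \<Rightarrow> 'd \<Rightarrow> 'd \<Rightarrow> complex" where
  "mu0 G \<phi>0 \<chi>1 j k = alpha_p \<phi>0 * cavg (\<lambda>x.
      sym2 (\<lambda>a i. complex_of_real (G x) * (pd a (\<chi>1 i) x + kd a i * \<phi>0 x) * cnj (\<phi>0 x)) j k
    - sym2 (\<lambda>i a. complex_of_real (G x) * \<chi>1 i x * cnj (pd a \<phi>0 x)) j k)"

definition mu1 :: "(real^'d::finite \<Rightarrow> real) \<Rightarrow> (real^'d \<Rightarrow> complex) \<Rightarrow> ('d \<Rightarrow> real^'d \<Rightarrow> complex)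
                    \<Rightarrow> ('d \<Rightarrow> 'd \<Rightarrow> real^'d \<Rightarrow> complex) \<Rightarrow> 'd \<Rightarrow> 'd \<Rightarrow> 'd \<Rightarrow> complex" where
  "mu1 G \<phi>0 \<chi>1 \<chi>2 i j k = alpha_p \<phi>0 * cavg (\<lambda>x.
      sym3 (\<lambda>a b c. complex_of_real (G x) * (pd a (\<chi>2 b c) x + kd a b * \<chi>1 c x) * cnj (\<phi>0 x)) i j k
    - sym3 (\<lambda>b c a. complex_of_real (G x) * \<chi>2 b c x * cnj (pd a \<phi>0 x)) i j k)"

definition admissible_coeff :: "(real^'d::finite \<Rightarrow> real) \<Rightarrow> bool" where
  "admissible_coeff f \<longleftrightarrow> smooth_fun f \<and> zd_periodic f \<and> (\<exists>c>0. \<forall>x. c \<le> f x)"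

definition per_smooth :: "(real^'d::finite \<Rightarrow> complex) \<Rightarrow> bool" where
  "per_smooth f \<longleftrightarrow> smooth_fun f \<and> zd_periodic f"

definition bloch_eig0 :: "(real^'d::finite \<Rightarrow> real) \<Rightarrow> (real^'d \<Rightarrow> real) \<Rightarrow> real \<Rightarrow> (real^'d \<Rightarrow> complex) \<Rightarrow> bool" where
  "bloch_eig0 G \<rho> w2 \<psi> \<longleftrightarrow> per_smooth \<psi> \<and>
     (\<forall>x. - (\<Sum>a\<in>UNIV. pd a (\<lambda>y. complex_of_real (G y) * pd a \<psi> y) x)
          = complex_of_real (w2 * \<rho> x) * \<psi> x)"

definition cell_chi1 :: "(real^'d::finite \<Rightarrow> real) \<Rightarrow> (real^'d \<Rightarrow> real) \<Rightarrow> real \<Rightarrow> (real^'d \<Rightarrow> complex)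
                         \<Rightarrow> ('d \<Rightarrow> real^'d \<Rightarrow> complex) \<Rightarrow> bool" where
  "cell_chi1 G \<rho> w2 \<phi>0 \<chi>1 \<longleftrightarrow>
     (\<forall>j. per_smooth (\<chi>1 j)) \<and>
     (\<forall>j. cavg (\<lambda>x. complex_of_real (\<rho> x) * \<chi>1 j x * cnj (\<phi>0 x)) = 0) \<and>
     (\<forall>\<phi> j. per_smooth \<phi> \<longrightarrow>
        cavg (\<lambda>x. \<Sum>a\<in>UNIV. complex_of_real (G x) * (pd a (\<chi>1 j) x + kd a j * \<phi>0 x) * cnj (pd a \<phi> x))
      - cavg (\<lambda>x. complex_of_real (G x) * pd j \<phi>0 x * cnj (\<phi> x))
      = complex_of_real w2 * cavg (\<lambda>x. complex_of_real (\<rho> x) * \<chi>1 j x * cnj (\<phi> x)))"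

text \<open>Cell problem for chi^(2) (weak form). The term {I (x) chi1}' symmetrises the last two indices.\<close>
definition cell_chi2 :: "(real^'d::finite \<Rightarrow> real) \<Rightarrow> (real^'d \<Rightarrow> real) \<Rightarrow> real \<Rightarrow> (real^'d \<Rightarrow> complex)
                         \<Rightarrow> ('d \<Rightarrow> real^'d \<Rightarrow> complex) \<Rightarrow> ('d \<Rightarrow> 'd \<Rightarrow> real^'d \<Rightarrow> complex) \<Rightarrow> bool" where
  "cell_chi2 G \<rho> w2 \<phi>0 \<chi>1 \<chi>2 \<longleftrightarrow>
     (\<forall>j k. per_smooth (\<chi>2 j k)) \<and>
     (\<forall>j k. cavg (\<lambda>x. complex_of_real (\<rho> x) * \<chi>2 j k x * cnj (\<phi>0 x)) = 0) \<and>
     (\<forall>\<phi> j k. per_smooth \<phi> \<longrightarrow>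
        cavg (\<lambda>x. \<Sum>a\<in>UNIV. complex_of_real (G x)
              * (pd a (\<chi>2 j k) x + (kd a j * \<chi>1 k x + kd a k * \<chi>1 j x) / 2) * cnj (pd a \<phi> x))
      - cavg (\<lambda>x. complex_of_real (G x)
              * ((pd j (\<chi>1 k) x + pd k (\<chi>1 j) x) / 2 + kd j k * \<phi>0 x) * cnj (\<phi> x))
      + cavg (\<lambda>x. complex_of_real (\<rho> x) / rho0 \<rho> \<phi>0 * mu0 G \<phi>0 \<chi>1 j k * \<phi>0 x * cnj (\<phi> x))
      = complex_of_real w2 * cavg (\<lambda>x. complex_of_real (\<rho> x) * \<chi>2 j k x * cnj (\<phi> x)))"

end

theory Submission
  imports Defs
begin

text \<open>Test the cell equation for \<open>\<chi>1\<^sub>i\<close> with \<open>\<overline>\<chi>2\<^sub>j\<^sub>k\<close> and the cell equation for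
  \<open>\<chi>2\<^sub>j\<^sub>k\<close> with \<open>\<overline>\<chi>1\<^sub>i\<close> and subtract: the terms \<open>\<langle>G \<nabla>\<chi>1\<^sub>i \<cdot> \<nabla>\<chi>2\<^sub>j\<^sub>k\<rangle>\<close> and
  \<open>\<omega>\<^sup>2\<langle>\<rho> \<chi>1\<^sub>i \<chi>2\<^sub>j\<^sub>k\<rangle>\<close> cancel, and the \<open>\<mu>\<^sup>(\<^sup>0\<^sup>)\<close> term vanishes by orthogonality of
  \<open>\<chi>1\<close> to \<open>\<rho>\<phi>\<^sup>0\<close>. As \<open>\<overline>\<phi>\<^sup>0\<close> is again an eigenfunction and the eigenvalue is simple,
  \<open>\<overline>\<phi>\<^sup>0 = c \<phi>\<^sup>0\<close> for a constant \<open>c\<close>, and then the full symmetrisation in \<open>i, j, k\<close> of the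
  difference is \<open>c\<close> times the integrand of \<open>\<mu>\<^sup>(\<^sup>1\<^sup>)\<close>; hence \<open>\<mu>\<^sup>(\<^sup>1\<^sup>) = 0\<close>.\<close>

lemma smooth_fun_continuous: "smooth_fun f \<Longrightarrow> continuous_on UNIV f"
  unfolding smooth_fun_def by (metis iter_pd.simps(1))

lemma smooth_fun_continuous_pd: "smooth_fun f \<Longrightarrow> continuous_on UNIV (pd a f)"
  unfolding smooth_fun_def by (metis iter_pd.simps)

lemma smooth_fun_has_pd:
  "smooth_fun f \<Longrightarrow> ((\<lambda>t. f (x + t *\<^sub>R axis a 1)) has_vector_derivative pd a f x) (at 0)"
  unfolding smooth_fun_def by (metis iter_pd.simps)

lemma smooth_fun_pd_has_pd:
  "smooth_fun f \<Longrightarrow> ((\<lambda>t. pd b f (x + t *\<^sub>R axis a 1)) has_vector_derivative pd a (pd b f) x) (at 0)"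
  unfolding smooth_fun_def by (metis iter_pd.simps)

lemma pd_eqI:
  "((\<lambda>t. f (x + t *\<^sub>R axis a 1)) has_vector_derivative D) (at 0) \<Longrightarrow> pd a f x = D"
  unfolding pd_def by (rule vector_derivative_at)

lemma pd_cnj_eqI:
  "((\<lambda>t. f (x + t *\<^sub>R axis a 1)) has_vector_derivative D) (at 0) \<Longrightarrow> pd a (\<lambda>y. cnj (f y)) x = cnj D"
  by (rule pd_eqI) (rule has_vector_derivative_cnj)

lemma iter_pd_cnj:
  assumes "smooth_fun f"
  shows "iter_pd as (\<lambda>y. cnj (f y)) = (\<lambda>y. cnj (iter_pd as f y))"
proof (induction as)
  case Nil
  then show ?case by simp
next
  case (Cons a as)
  have "((\<lambda>t. iter_pd as f (x + t *\<^sub>R axis a 1)) has_vector_derivative iter_pd (a # as) f x) (at 0)"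
    for x using assms unfolding smooth_fun_def by blast
  then show ?case
    using pd_cnj_eqI Cons by fastforce
qed

lemma pd_cnj: "smooth_fun f \<Longrightarrow> pd a (\<lambda>y. cnj (f y)) = (\<lambda>y. cnj (pd a f y))"
  using iter_pd_cnj[of f "[a]"] by simp

lemma smooth_fun_cnj:
  assumes "smooth_fun f"
  shows "smooth_fun (\<lambda>y. cnj (f y))"
  using assms unfolding smooth_fun_def iter_pd_cnj[OF assms]
  by (auto intro: continuous_on_cnj has_vector_derivative_cnj)

lemma per_smooth_cnj: "per_smooth f \<Longrightarrow> per_smooth (\<lambda>y. cnj (f y))"
  unfolding per_smooth_def zd_periodic_def using smooth_fun_cnj by auto

lemma pd_cmult:
  fixes f :: "real^'d::finite \<Rightarrow> complex"
  assumes "smooth_fun f"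
  shows "pd a (\<lambda>y. c * f y) x = c * pd a f x"
  by (rule pd_eqI) (rule has_vector_derivative_mult_right[OF smooth_fun_has_pd[OF assms]])

lemma pd_of_real_mult_cnj_pd:
  fixes G :: "real^'d::finite \<Rightarrow> real" and f :: "real^'d \<Rightarrow> complex"
  assumes "smooth_fun G" "smooth_fun f"
  shows "pd a (\<lambda>y. complex_of_real (G y) * cnj (pd b f y)) x
       = cnj (pd a (\<lambda>y. complex_of_real (G y) * pd b f y) x)"
proof -
  have "((\<lambda>t. G (x + t *\<^sub>R axis a 1)) has_field_derivative pd a G x) (at 0)"
    using smooth_fun_has_pd[OF assms(1)] by (simp add: has_real_derivative_iff_has_vector_derivative)
  from has_vector_derivative_mult[OF has_vector_derivative_of_real[OF this]
      smooth_fun_pd_has_pd[OF assms(2), of b x a]]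
  obtain D where D: "((\<lambda>t. complex_of_real (G (x + t *\<^sub>R axis a 1)) * pd b f (x + t *\<^sub>R axis a 1))
      has_vector_derivative D) (at 0)"
    by blast
  show ?thesis
    using pd_cnj_eqI[OF D] pd_eqI[OF D] by simp
qed

lemma bloch_eig0_cnj:
  assumes G: "admissible_coeff G" and eig: "bloch_eig0 G \<rho> w2 \<phi>"
  shows "bloch_eig0 G \<rho> w2 (\<lambda>x. cnj (\<phi> x))"
proof -
  have sG: "smooth_fun G" using G by (simp add: admissible_coeff_def)
  have s\<phi>: "smooth_fun \<phi>" using eig by (simp add: bloch_eig0_def per_smooth_def)
  have "- (\<Sum>a\<in>UNIV. pd a (\<lambda>y. complex_of_real (G y) * pd a (\<lambda>y. cnj (\<phi> y)) y) x)
      = cnj (- (\<Sum>a\<in>UNIV. pd a (\<lambda>y. complex_of_real (G y) * pd a \<phi> y) x))" for x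
    by (simp add: pd_cnj[OF s\<phi>] pd_of_real_mult_cnj_pd[OF sG s\<phi>])
  with eig show ?thesis
    unfolding bloch_eig0_def by (simp add: per_smooth_cnj)
qed

lemma simple_eigenfunction_cnj_phase:
  assumes G: "admissible_coeff G" and eig: "bloch_eig0 G \<rho> w2 \<phi>0"
    and simple: "\<And>\<psi>. bloch_eig0 G \<rho> w2 \<psi> \<Longrightarrow> \<exists>c::complex. \<forall>x. \<psi> x = c * \<phi>0 x"
  obtains c where "\<And>x. cnj (\<phi>0 x) = c * \<phi>0 x" and "\<And>a x. cnj (pd a \<phi>0 x) = c * pd a \<phi>0 x"
proof -
  have s\<phi>: "smooth_fun \<phi>0" using eig by (simp add: bloch_eig0_def per_smooth_def)
  obtain c where c: "\<And>x. cnj (\<phi>0 x) = c * \<phi>0 x"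
    using simple[OF bloch_eig0_cnj[OF G eig]] by blast
  then have "(\<lambda>y. cnj (\<phi>0 y)) = (\<lambda>y. c * \<phi>0 y)" by auto
  then have "cnj (pd a \<phi>0 x) = c * pd a \<phi>0 x" for a x
    by (metis pd_cnj[OF s\<phi>] pd_cmult[OF s\<phi>])
  with c that show thesis by blast
qed

lemma continuous_on_integrable_on_WI:
  "continuous_on UNIV f \<Longrightarrow> (f :: real^'d::finite \<Rightarrow> complex) integrable_on WI"
  unfolding WI_def by (rule integrable_continuous) (rule continuous_on_subset, auto)

lemma cavg_diff_diff_mult:
  fixes f g h :: "real^'d::finite \<Rightarrow> complex"
  assumes "continuous_on UNIV f" "continuous_on UNIV g" "continuous_on UNIV h"
  shows "cavg (\<lambda>x. f x - g x - c * h x) = cavg f - cavg g - c * cavg h"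
  using assms unfolding cavg_def
  by (simp add: integral_diff integral_mult_right continuous_on_integrable_on_WI continuous_intros)

lemma has_integral_0_of_cavg_0:
  "continuous_on UNIV f \<Longrightarrow> cavg f = 0 \<Longrightarrow> ((f :: real^'d::finite \<Rightarrow> complex) has_integral 0) WI"
  unfolding cavg_def using continuous_on_integrable_on_WI integrable_integral by fastforce

text \<open>Integrands of the weak cell equations tested against \<open>\<overline>\<psi>\<close>, all terms on one side.\<close>

definition chi1_residual ::
    "(real^'d::finite \<Rightarrow> real) \<Rightarrow> (real^'d \<Rightarrow> real) \<Rightarrow> real \<Rightarrow> (real^'d \<Rightarrow> complex)
      \<Rightarrow> ('d \<Rightarrow> real^'d \<Rightarrow> complex) \<Rightarrow> 'd \<Rightarrow> (real^'d \<Rightarrow> complex) \<Rightarrow> real^'d \<Rightarrow> complex" where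
  "chi1_residual G \<rho> w2 \<phi>0 \<chi>1 i \<psi> x =
      (\<Sum>a\<in>UNIV. complex_of_real (G x) * (pd a (\<chi>1 i) x + kd a i * \<phi>0 x) * pd a \<psi> x)
    - complex_of_real (G x) * pd i \<phi>0 x * \<psi> x
    - complex_of_real w2 * (complex_of_real (\<rho> x) * \<chi>1 i x * \<psi> x)"

definition chi2_residual ::
    "(real^'d::finite \<Rightarrow> real) \<Rightarrow> (real^'d \<Rightarrow> real) \<Rightarrow> real \<Rightarrow> (real^'d \<Rightarrow> complex)
      \<Rightarrow> ('d \<Rightarrow> real^'d \<Rightarrow> complex) \<Rightarrow> ('d \<Rightarrow> 'd \<Rightarrow> real^'d \<Rightarrow> complex)
      \<Rightarrow> 'd \<Rightarrow> 'd \<Rightarrow> (real^'d \<Rightarrow> complex) \<Rightarrow> real^'d \<Rightarrow> complex" where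
  "chi2_residual G \<rho> w2 \<phi>0 \<chi>1 \<chi>2 j k \<psi> x =
      (\<Sum>a\<in>UNIV. complex_of_real (G x)
         * (pd a (\<chi>2 j k) x + (kd a j * \<chi>1 k x + kd a k * \<chi>1 j x) / 2) * pd a \<psi> x)
    - complex_of_real (G x) * ((pd j (\<chi>1 k) x + pd k (\<chi>1 j) x) / 2 + kd j k * \<phi>0 x) * \<psi> x
    - complex_of_real w2 * (complex_of_real (\<rho> x) * \<chi>2 j k x * \<psi> x)"

lemma chi1_residual_has_integral_0:
  assumes "admissible_coeff G" "admissible_coeff \<rho>" "per_smooth \<phi>0"
    and chi1: "cell_chi1 G \<rho> w2 \<phi>0 \<chi>1" and \<psi>: "per_smooth \<psi>"
  shows "(chi1_residual G \<rho> w2 \<phi>0 \<chi>1 i \<psi> has_integral 0) WI"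
proof -
  have s: "smooth_fun G" "smooth_fun \<rho>" "smooth_fun \<phi>0" "smooth_fun \<psi>" "\<And>j. smooth_fun (\<chi>1 j)"
    using assms by (auto simp: admissible_coeff_def per_smooth_def cell_chi1_def)
  note cont = s[THEN smooth_fun_continuous] s[THEN smooth_fun_continuous_pd]
  have "cavg (\<lambda>x. \<Sum>a\<in>UNIV. complex_of_real (G x) * (pd a (\<chi>1 i) x + kd a i * \<phi>0 x) * pd a \<psi> x)
      - cavg (\<lambda>x. complex_of_real (G x) * pd i \<phi>0 x * \<psi> x)
      = complex_of_real w2 * cavg (\<lambda>x. complex_of_real (\<rho> x) * \<chi>1 i x * \<psi> x)"
    using chi1 unfolding cell_chi1_def
    by (auto dest!: spec[of _ "\<lambda>y. cnj (\<psi> y)"] simp: per_smooth_cnj[OF \<psi>] pd_cnj[OF s(4)])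
  then have "cavg (chi1_residual G \<rho> w2 \<phi>0 \<chi>1 i \<psi>) = 0"
    unfolding chi1_residual_def[abs_def]
    by (subst cavg_diff_diff_mult) (auto intro!: continuous_intros cont)
  then show ?thesis
    by (intro has_integral_0_of_cavg_0)
      (auto simp: chi1_residual_def[abs_def] intro!: continuous_intros cont)
qed

lemma chi2_residual_has_integral_0:
  assumes "admissible_coeff G" "admissible_coeff \<rho>" "per_smooth \<phi>0"
    "cell_chi1 G \<rho> w2 \<phi>0 \<chi>1" and chi2: "cell_chi2 G \<rho> w2 \<phi>0 \<chi>1 \<chi>2"
    and \<psi>: "per_smooth \<psi>" and \<psi>_orth: "cavg (\<lambda>x. complex_of_real (\<rho> x) * \<psi> x * cnj (\<phi>0 x)) = 0"
    and phase: "\<And>x. cnj (\<phi>0 x) = c * \<phi>0 x"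
  shows "(chi2_residual G \<rho> w2 \<phi>0 \<chi>1 \<chi>2 j k \<psi> has_integral 0) WI"
proof -
  have s: "smooth_fun G" "smooth_fun \<rho>" "smooth_fun \<phi>0" "smooth_fun \<psi>"
    "\<And>j. smooth_fun (\<chi>1 j)" "\<And>j k. smooth_fun (\<chi>2 j k)"
    using assms by (auto simp: admissible_coeff_def per_smooth_def cell_chi1_def cell_chi2_def)
  note cont = s[THEN smooth_fun_continuous] s[THEN smooth_fun_continuous_pd]
  have phase_inv: "\<phi>0 x = cnj c * cnj (\<phi>0 x)" for x
    by (metis phase complex_cnj_cnj complex_cnj_mult)
  have "(\<lambda>x. complex_of_real (\<rho> x) / rho0 \<rho> \<phi>0 * mu0 G \<phi>0 \<chi>1 j k * \<phi>0 x * \<psi> x)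
      = (\<lambda>x. mu0 G \<phi>0 \<chi>1 j k / rho0 \<rho> \<phi>0 * cnj c * (complex_of_real (\<rho> x) * \<psi> x * cnj (\<phi>0 x)))"
    by (rule ext, subst phase_inv) (simp add: algebra_simps)
  then have mu0_term: "cavg (\<lambda>x. complex_of_real (\<rho> x) / rho0 \<rho> \<phi>0 * mu0 G \<phi>0 \<chi>1 j k * \<phi>0 x * \<psi> x) = 0"
    using \<psi>_orth by (simp add: cavg_def)
  have "cavg (\<lambda>x. \<Sum>a\<in>UNIV. complex_of_real (G x)
          * (pd a (\<chi>2 j k) x + (kd a j * \<chi>1 k x + kd a k * \<chi>1 j x) / 2) * cnj (pd a \<phi> x))
      - cavg (\<lambda>x. complex_of_real (G x) * ((pd j (\<chi>1 k) x + pd k (\<chi>1 j) x) / 2 + kd j k * \<phi>0 x) * cnj (\<phi> x))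
      + cavg (\<lambda>x. complex_of_real (\<rho> x) / rho0 \<rho> \<phi>0 * mu0 G \<phi>0 \<chi>1 j k * \<phi>0 x * cnj (\<phi> x))
      = complex_of_real w2 * cavg (\<lambda>x. complex_of_real (\<rho> x) * \<chi>2 j k x * cnj (\<phi> x))"
    if "per_smooth \<phi>" for \<phi>
    using chi2 that unfolding cell_chi2_def by blast
  from this[OF per_smooth_cnj[OF \<psi>]]
  have "cavg (\<lambda>x. \<Sum>a\<in>UNIV. complex_of_real (G x)
          * (pd a (\<chi>2 j k) x + (kd a j * \<chi>1 k x + kd a k * \<chi>1 j x) / 2) * pd a \<psi> x)
      - cavg (\<lambda>x. complex_of_real (G x) * ((pd j (\<chi>1 k) x + pd k (\<chi>1 j) x) / 2 + kd j k * \<phi>0 x) * \<psi> x)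
      = complex_of_real w2 * cavg (\<lambda>x. complex_of_real (\<rho> x) * \<chi>2 j k x * \<psi> x)"
    by (simp only: pd_cnj[OF s(4)] complex_cnj_cnj mu0_term add_0_right)
  then have "cavg (chi2_residual G \<rho> w2 \<phi>0 \<chi>1 \<chi>2 j k \<psi>) = 0"
    unfolding chi2_residual_def[abs_def]
    by (subst cavg_diff_diff_mult) (auto intro!: continuous_intros cont)
  then show ?thesis
    by (intro has_integral_0_of_cavg_0)
      (auto simp: chi2_residual_def[abs_def] intro!: continuous_intros cont)
qed

lemma kd_sym: "kd a b = kd b a"
  by (simp add: kd_def)

lemma sum_kd_mult: "(\<Sum>a\<in>UNIV. kd a i * X a) = X (i :: 'd::finite)"
proof -
  have "(\<Sum>a\<in>UNIV. kd a i * X a) = (\<Sum>a\<in>UNIV. if a = i then X a else 0)"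
    by (rule sum.cong) (auto simp: kd_def)
  then show ?thesis by simp
qed

text \<open>The algebraic core, with \<open>g = G(x)\<close>, \<open>p = \<phi>\<^sup>0(x)\<close>, \<open>dp a = \<partial>\<^sub>a\<phi>\<^sup>0(x)\<close>,
  \<open>u i = \<chi>\<^sup>(\<^sup>1\<^sup>)\<^sub>i(x)\<close>, \<open>du a i = \<partial>\<^sub>a\<chi>\<^sup>(\<^sup>1\<^sup>)\<^sub>i(x)\<close>, and similarly \<open>v\<close>, \<open>dv\<close> for \<open>\<chi>\<^sup>(\<^sup>2\<^sup>)\<close>:
  the quadratic gradient terms and the \<open>w r\<close> terms cancel in \<open>D\<close>, and the remaining
  terms symmetrise to the integrand of \<open>\<mu>\<^sup>(\<^sup>1\<^sup>)\<close>.\<close>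

lemma sym3_cross_residual_identity:
  fixes g p w r :: complex and dp u :: "'d::finite \<Rightarrow> complex"
    and du v :: "'d \<Rightarrow> 'd \<Rightarrow> complex" and dv :: "'d \<Rightarrow> 'd \<Rightarrow> 'd \<Rightarrow> complex"
  assumes D: "\<And>i j k. D i j k =
      ((\<Sum>a\<in>UNIV. g * (du a i + kd a i * p) * dv a j k) - g * dp i * v j k - w * (r * u i * v j k))
    - ((\<Sum>a\<in>UNIV. g * (dv a j k + (kd a j * u k + kd a k * u j) / 2) * du a i)
         - g * ((du j k + du k j) / 2 + kd j k * p) * u i - w * (r * v j k * u i))"
  shows "sym3 (\<lambda>a b c. g * (dv a b c + kd a b * u c) * p) i j k - sym3 (\<lambda>b c a. g * v b c * dp a) i j k
       = sym3 D i j k"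
proof -
  have flux1: "(\<Sum>a\<in>UNIV. g * (du a i + kd a i * p) * dv a j k)
      = (\<Sum>a\<in>UNIV. g * du a i * dv a j k) + g * p * dv i j k" for i j k
  proof -
    have "(\<Sum>a\<in>UNIV. g * (du a i + kd a i * p) * dv a j k)
        = (\<Sum>a\<in>UNIV. g * du a i * dv a j k + kd a i * (g * p * dv a j k))"
      by (rule sum.cong) (auto simp: algebra_simps)
    then show ?thesis by (simp add: sum.distrib sum_kd_mult)
  qed
  have flux2: "(\<Sum>a\<in>UNIV. g * (dv a j k + (kd a j * u k + kd a k * u j) / 2) * du a i)
      = (\<Sum>a\<in>UNIV. g * du a i * dv a j k) + g * u k * du j i / 2 + g * u j * du k i / 2" for i j k
  proof -
    have "(\<Sum>a\<in>UNIV. g * (dv a j k + (kd a j * u k + kd a k * u j) / 2) * du a i)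
        = (\<Sum>a\<in>UNIV. g * du a i * dv a j k + kd a j * (g * u k * du a i * (1/2))
                                          + kd a k * (g * u j * du a i * (1/2)))"
      by (rule sum.cong) (auto simp: algebra_simps add_divide_distrib)
    then show ?thesis by (simp only: sum.distrib sum_kd_mult) simp
  qed
  have D_simp: "D i j k = g * p * dv i j k - g * dp i * v j k + g * kd j k * p * u i
      - g * (u k * du j i + u j * du k i) / 2 + g * (du j k + du k j) / 2 * u i" for i j k
    unfolding D flux1 flux2 by (simp add: algebra_simps add_divide_distrib diff_divide_distrib)
  show ?thesis
    unfolding D_simp sym3_def by (simp add: algebra_simps add_divide_distrib diff_divide_distrib kd_sym)
qed

lemma mu1_integrand_eq_sym3_residual:
  assumes phase: "cnj (\<phi>0 x) = c * \<phi>0 x" "\<And>a. cnj (pd a \<phi>0 x) = c * pd a \<phi>0 x"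
  shows "sym3 (\<lambda>a b c'. complex_of_real (G x) * (pd a (\<chi>2 b c') x + kd a b * \<chi>1 c' x) * cnj (\<phi>0 x)) i j k
       - sym3 (\<lambda>b c' a. complex_of_real (G x) * \<chi>2 b c' x * cnj (pd a \<phi>0 x)) i j k
       = c * sym3 (\<lambda>i j k. chi1_residual G \<rho> w \<phi>0 \<chi>1 i (\<chi>2 j k) x
                         - chi2_residual G \<rho> w \<phi>0 \<chi>1 \<chi>2 j k (\<chi>1 i) x) i j k"
proof -
  have "sym3 (\<lambda>a b c'. complex_of_real (G x) * (pd a (\<chi>2 b c') x + kd a b * \<chi>1 c' x) * \<phi>0 x) i j k
      - sym3 (\<lambda>b c' a. complex_of_real (G x) * \<chi>2 b c' x * pd a \<phi>0 x) i j k
      = sym3 (\<lambda>i j k. chi1_residual G \<rho> w \<phi>0 \<chi>1 i (\<chi>2 j k) x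
                         - chi2_residual G \<rho> w \<phi>0 \<chi>1 \<chi>2 j k (\<chi>1 i) x) i j k"
    by (rule sym3_cross_residual_identity) (simp add: chi1_residual_def chi2_residual_def)
  moreover have "sym3 (\<lambda>a b c'. complex_of_real (G x) * (pd a (\<chi>2 b c') x + kd a b * \<chi>1 c' x) * cnj (\<phi>0 x)) i j k
      - sym3 (\<lambda>b c' a. complex_of_real (G x) * \<chi>2 b c' x * cnj (pd a \<phi>0 x)) i j k
      = c * (sym3 (\<lambda>a b c'. complex_of_real (G x) * (pd a (\<chi>2 b c') x + kd a b * \<chi>1 c' x) * \<phi>0 x) i j k
           - sym3 (\<lambda>b c' a. complex_of_real (G x) * \<chi>2 b c' x * pd a \<phi>0 x) i j k)"
    unfolding phase by (simp add: sym3_def algebra_simps)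
  ultimately show ?thesis by simp
qed

lemma sym3_has_integral_0:
  assumes "\<And>i j k. (T i j k has_integral (0::complex)) S"
  shows "((\<lambda>x. sym3 (\<lambda>i j k. T i j k x) i j k) has_integral 0) S"
proof -
  have "((\<lambda>x. (T i j k x + T i k j x + T j i k x + T j k i x + T k i j x + T k j i x) / 6)
      has_integral (0 + 0 + 0 + 0 + 0 + 0) / 6) S"
    by (intro has_integral_divide has_integral_add assms)
  then show ?thesis by (simp add: sym3_def)
qed

theorem mainTheorem9:
  fixes G \<rho> :: "real^'d::finite \<Rightarrow> real"
    and \<phi>0 :: "real^'d \<Rightarrow> complex"
    and w2 :: real
    and \<chi>1 :: "'d \<Rightarrow> real^'d \<Rightarrow> complex"
    and \<chi>2 :: "'d \<Rightarrow> 'd \<Rightarrow> real^'d \<Rightarrow> complex"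
  assumes G: "admissible_coeff G"
    and rho: "admissible_coeff \<rho>"
    and eig: "bloch_eig0 G \<rho> w2 \<phi>0"
    and norm: "cavg (\<lambda>x. complex_of_real (\<rho> x) * \<phi>0 x * cnj (\<phi>0 x)) = 1"
    and simple: "\<And>\<psi>. bloch_eig0 G \<rho> w2 \<psi> \<Longrightarrow> \<exists>c::complex. \<forall>x. \<psi> x = c * \<phi>0 x"
    and chi1: "cell_chi1 G \<rho> w2 \<phi>0 \<chi>1"
    and chi2: "cell_chi2 G \<rho> w2 \<phi>0 \<chi>1 \<chi>2"
  shows "(\<forall>i j k. mu1 G \<phi>0 \<chi>1 \<chi>2 i j k = 0)
       \<and> (\<forall>j. cavg (\<lambda>x. complex_of_real (\<rho> x) * \<chi>1 j x * cnj (\<phi>0 x)) = 0)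
       \<and> (\<forall>j k. cavg (\<lambda>x. complex_of_real (\<rho> x) * \<chi>2 j k x * cnj (\<phi>0 x)) = 0)"
proof -
  obtain c where phase: "\<And>x. cnj (\<phi>0 x) = c * \<phi>0 x" "\<And>a x. cnj (pd a \<phi>0 x) = c * pd a \<phi>0 x"
    using simple_eigenfunction_cnj_phase[OF G eig simple] by blast
  have \<phi>0: "per_smooth \<phi>0" using eig by (simp add: bloch_eig0_def)
  have \<chi>: "per_smooth (\<chi>1 i)" "per_smooth (\<chi>2 j k)"
    and orth1: "\<forall>j. cavg (\<lambda>x. complex_of_real (\<rho> x) * \<chi>1 j x * cnj (\<phi>0 x)) = 0"
    and orth2: "\<forall>j k. cavg (\<lambda>x. complex_of_real (\<rho> x) * \<chi>2 j k x * cnj (\<phi>0 x)) = 0" for i j k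
    using chi1 chi2 by (auto simp: cell_chi1_def cell_chi2_def)
  have "((\<lambda>x. chi1_residual G \<rho> w2 \<phi>0 \<chi>1 i (\<chi>2 j k) x - chi2_residual G \<rho> w2 \<phi>0 \<chi>1 \<chi>2 j k (\<chi>1 i) x)
      has_integral 0) WI" for i j k
    using has_integral_diff[OF chi1_residual_has_integral_0[OF G rho \<phi>0 chi1 \<chi>(2)]
        chi2_residual_has_integral_0[OF G rho \<phi>0 chi1 chi2 \<chi>(1) orth1[rule_format] phase(1)]]
    by simp
  from has_integral_mult_right[OF sym3_has_integral_0[OF this], of c]
  have integrand_integral: "((\<lambda>x. c * sym3 (\<lambda>i j k. chi1_residual G \<rho> w2 \<phi>0 \<chi>1 i (\<chi>2 j k) x
                        - chi2_residual G \<rho> w2 \<phi>0 \<chi>1 \<chi>2 j k (\<chi>1 i) x) i j k) has_integral 0) WI" for i j k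
    by simp
  have "mu1 G \<phi>0 \<chi>1 \<chi>2 i j k = 0" for i j k
    unfolding mu1_def cavg_def mu1_integrand_eq_sym3_residual[where \<rho> = \<rho> and w = w2, OF phase]
    by (subst integral_unique[OF integrand_integral]) simp
  with orth1 orth2 show ?thesis by blast
qed

end
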